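(* For any distinct $f_0,f_1\in\Delta(\mathcal{G})$ there exists a vertex-transitive graph $G$ such that $f_0(G)\neq f_1(G)$.
   Context: $\mathcal{G}$ is the class of finite simple graphs. $E_n$ is the graph with $n$ vertices and no edges; $\sqcup$ is disjoint union; $\boxtimes$ is the strong product (vertex set $V(G)\times V(H)$, distinct $(g,h),(g',h')$ adjacent iff ($g=g'$ or $gg'\in E(G)$) and ($h=h'$ or $hh'\in E(H)$)). A cohomomorphism $G\to H$ is a map $V(G)\to V(H)$ sending distinct non-adjacent vertices to distinct non-adjacent vertices; $G\le_{\mathcal{G}}H$ if one exists. $\Delta(\mathcal{G})$ is the set of functions $f:\mathcal{G}\to\mathbb{R}_{\ge0}$ with $f(E_n)=n$, $f(G\boxtimes H)=f(G)f(H)$, $f(G\sqcup H)=f(G)+f(H)$, and $f(G)\le f(H)$ whenever $G\le_{\mathcal{G}}H$. *)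

theory Defs
  imports Complex_Main "HOL-Library.Nat_Bijection"
begin

text \<open>Finite simple graphs with vertices drawn from nat (every finite simple graph
is isomorphic to one of these; all functions in Delta are isomorphism invariant
because isomorphisms are cohomomorphisms in both directions).\<close>

definition wf_graph :: "nat set \<times> (nat \<times> nat) set \<Rightarrow> bool" where
  "wf_graph VE \<longleftrightarrow> finite (fst VE) \<and> snd VE \<subseteq> fst VE \<times> fst VE
     \<and> (\<forall>x y. (x, y) \<in> snd VE \<longrightarrow> (y, x) \<in> snd VE)
     \<and> (\<forall>x. (x, x) \<notin> snd VE)"

typedef graph = "{VE. wf_graph VE}"
  by (rule exI[of _ "({}, {})"]) (simp add: wf_graph_def)

definition gV :: "graph \<Rightarrow> nat set" where "gV G = fst (Rep_graph G)"
definition gE :: "graph \<Rightarrow> (nat \<times> nat) set" where "gE G = snd (Rep_graph G)"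

definition adj :: "graph \<Rightarrow> nat \<Rightarrow> nat \<Rightarrow> bool" where
  "adj G x y \<longleftrightarrow> (x, y) \<in> gE G"

definition empty_graph :: "nat \<Rightarrow> graph" where
  "empty_graph n = Abs_graph ({0..<n}, {})"

definition disj_union :: "graph \<Rightarrow> graph \<Rightarrow> graph" where
  "disj_union G H = Abs_graph
     ((\<lambda>v. 2 * v) ` gV G \<union> (\<lambda>v. 2 * v + 1) ` gV H,
      (\<lambda>(x, y). (2 * x, 2 * y)) ` gE G \<union> (\<lambda>(x, y). (2 * x + 1, 2 * y + 1)) ` gE H)"

definition strong_prod :: "graph \<Rightarrow> graph \<Rightarrow> graph" where
  "strong_prod G H = Abs_graph
     (prod_encode ` (gV G \<times> gV H),
      {(prod_encode (g, h), prod_encode (g', h')) | g h g' h'.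
         g \<in> gV G \<and> g' \<in> gV G \<and> h \<in> gV H \<and> h' \<in> gV H \<and> (g, h) \<noteq> (g', h') \<and>
         (g = g' \<or> adj G g g') \<and> (h = h' \<or> adj H h h')})"

definition cohom :: "graph \<Rightarrow> graph \<Rightarrow> (nat \<Rightarrow> nat) \<Rightarrow> bool" where
  "cohom G H \<phi> \<longleftrightarrow> \<phi> ` gV G \<subseteq> gV H \<and>
     (\<forall>x\<in>gV G. \<forall>y\<in>gV G. x \<noteq> y \<and> \<not> adj G x y \<longrightarrow> \<phi> x \<noteq> \<phi> y \<and> \<not> adj H (\<phi> x) (\<phi> y))"

definition graph_le :: "graph \<Rightarrow> graph \<Rightarrow> bool" where
  "graph_le G H \<longleftrightarrow> (\<exists>\<phi>. cohom G H \<phi>)"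

definition Delta :: "(graph \<Rightarrow> real) set" where
  "Delta = {f. (\<forall>G. f G \<ge> 0)
     \<and> (\<forall>n. f (empty_graph n) = real n)
     \<and> (\<forall>G H. f (strong_prod G H) = f G * f H)
     \<and> (\<forall>G H. f (disj_union G H) = f G + f H)
     \<and> (\<forall>G H. graph_le G H \<longrightarrow> f G \<le> f H)}"

definition automorphism :: "graph \<Rightarrow> (nat \<Rightarrow> nat) \<Rightarrow> bool" where
  "automorphism G \<sigma> \<longleftrightarrow> bij_betw \<sigma> (gV G) (gV G) \<and>
     (\<forall>x\<in>gV G. \<forall>y\<in>gV G. adj G (\<sigma> x) (\<sigma> y) \<longleftrightarrow> adj G x y)"

definition vertex_transitive :: "graph \<Rightarrow> bool" where
  "vertex_transitive G \<longleftrightarrow> (\<forall>u\<in>gV G. \<forall>v\<in>gV G. \<exists>\<sigma>. automorphism G \<sigma> \<and> \<sigma> u = v)"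

end

theory Submission
  imports Defs "HOL-Combinatorics.Permutations" "HOL-Library.FuncSet" "HOL-Real_Asymp.Real_Asymp"
begin

(* Suppose f0 G < f1 G and let m = |V(G)|. The vertices of the n-th strong power of G are the
   words of length n over V(G); group them into type classes according to how often each vertex
   of G occurs. Permuting coordinates is an automorphism of the power that preserves types and
   acts transitively on each class, so every class induces a vertex-transitive graph, on which
   f0 and f1 agree. There are at most (n+1)^m classes, and every f in Delta is monotone and
   subadditive over vertex covers (H <= H[A] + H[-A]), so
     f1(G)^n <= sum over classes of f1(class) = sum of f0(class) <= (n+1)^m f0(G)^n,
   which fails for large n. *)

lemma wf_graph_Rep_graph: "wf_graph (Rep_graph G)"
  using Rep_graph by simp

lemma finite_gV: "finite (gV G)"
  using wf_graph_Rep_graph[of G] by (simp add: wf_graph_def gV_def)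

lemma adj_sym: "adj G x y \<Longrightarrow> adj G y x"
  using wf_graph_Rep_graph[of G] by (simp add: wf_graph_def gE_def adj_def)

lemma adj_irrefl: "\<not> adj G x x"
  using wf_graph_Rep_graph[of G] by (simp add: wf_graph_def gE_def adj_def)

lemma adj_in_gV: "adj G x y \<Longrightarrow> x \<in> gV G \<and> y \<in> gV G"
  using wf_graph_Rep_graph[of G] by (auto simp: wf_graph_def gE_def adj_def gV_def)

lemma gV_Abs_graph: "wf_graph X \<Longrightarrow> gV (Abs_graph X) = fst X"
  by (simp add: gV_def Abs_graph_inverse)

lemma adj_Abs_graph: "wf_graph X \<Longrightarrow> adj (Abs_graph X) x y \<longleftrightarrow> (x, y) \<in> snd X"
  by (simp add: adj_def gE_def Abs_graph_inverse)

lemma graph_eqI: "gV G = gV H \<Longrightarrow> (\<And>x y. adj G x y \<longleftrightarrow> adj H x y) \<Longrightarrow> G = H"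
proof -
  assume "gV G = gV H" and adj_eq: "\<And>x y. adj G x y \<longleftrightarrow> adj H x y"
  moreover have "gE G = gE H"
    using adj_eq by (auto simp: adj_def)
  ultimately show "G = H"
    by (metis Rep_graph_inject gE_def gV_def prod.collapse)
qed

lemma Delta_nonneg: "f \<in> Delta \<Longrightarrow> 0 \<le> f G"
  by (simp add: Delta_def)

lemma Delta_mono: "f \<in> Delta \<Longrightarrow> graph_le G H \<Longrightarrow> f G \<le> f H"
  by (simp add: Delta_def)

lemma Delta_empty_graph: "f \<in> Delta \<Longrightarrow> f (empty_graph n) = real n"
  by (simp add: Delta_def)

lemma Delta_strong_prod: "f \<in> Delta \<Longrightarrow> f (strong_prod G H) = f G * f H"
  by (simp add: Delta_def)

lemma Delta_disj_union: "f \<in> Delta \<Longrightarrow> f (disj_union G H) = f G + f H"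
  by (simp add: Delta_def)

lemma wf_empty_graph: "wf_graph ({0..<n}, {})"
  by (simp add: wf_graph_def)

lemma gV_empty_graph [simp]: "gV (empty_graph n) = {0..<n}"
  by (simp add: empty_graph_def gV_Abs_graph[OF wf_empty_graph])

lemma adj_empty_graph [simp]: "\<not> adj (empty_graph n) x y"
  by (simp add: empty_graph_def adj_Abs_graph[OF wf_empty_graph])

lemma wf_disj_union: "wf_graph ((\<lambda>v. 2 * v) ` gV G \<union> (\<lambda>v. 2 * v + 1) ` gV H,
    (\<lambda>(x, y). (2 * x, 2 * y)) ` gE G \<union> (\<lambda>(x, y). (2 * x + 1, 2 * y + 1)) ` gE H)"
  unfolding wf_graph_def using finite_gV[of G] finite_gV[of H]
  using adj_sym[of G] adj_sym[of H] adj_irrefl[of G] adj_irrefl[of H] adj_in_gV[of G] adj_in_gV[of H]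
  by (auto simp: adj_def)

lemma gV_disj_union: "gV (disj_union G H) = (\<lambda>v. 2 * v) ` gV G \<union> (\<lambda>v. 2 * v + 1) ` gV H"
  unfolding disj_union_def gV_Abs_graph[OF wf_disj_union] by simp

lemma adj_disj_union: "adj (disj_union G H) x y \<longleftrightarrow>
    (\<exists>a b. x = 2 * a \<and> y = 2 * b \<and> adj G a b) \<or> (\<exists>a b. x = 2 * a + 1 \<and> y = 2 * b + 1 \<and> adj H a b)"
  unfolding disj_union_def adj_Abs_graph[OF wf_disj_union] by (auto simp: adj_def)

definition adj_or_eq :: "graph \<Rightarrow> nat \<Rightarrow> nat \<Rightarrow> bool" where
  "adj_or_eq G a b \<longleftrightarrow> a = b \<or> adj G a b"

lemma adj_or_eq_refl: "adj_or_eq G a a"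
  by (simp add: adj_or_eq_def)

lemma adj_or_eq_sym: "adj_or_eq G a b \<Longrightarrow> adj_or_eq G b a"
  by (auto simp: adj_or_eq_def adj_sym)

lemma wf_strong_prod: "wf_graph (prod_encode ` (gV G \<times> gV H),
    {(prod_encode (g, h), prod_encode (g', h')) | g h g' h'.
       g \<in> gV G \<and> g' \<in> gV G \<and> h \<in> gV H \<and> h' \<in> gV H \<and> (g, h) \<noteq> (g', h') \<and>
       (g = g' \<or> adj G g g') \<and> (h = h' \<or> adj H h h')})"
  unfolding wf_graph_def using finite_gV[of G] finite_gV[of H] adj_sym[of G] adj_sym[of H]
  by (auto simp: prod_encode_eq)

lemma gV_strong_prod: "gV (strong_prod G H) = prod_encode ` (gV G \<times> gV H)"
  unfolding strong_prod_def gV_Abs_graph[OF wf_strong_prod] by simp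

lemma adj_strong_prod: "adj (strong_prod G H) (prod_encode (g, h)) (prod_encode (g', h')) \<longleftrightarrow>
    g \<in> gV G \<and> g' \<in> gV G \<and> h \<in> gV H \<and> h' \<in> gV H \<and> (g, h) \<noteq> (g', h') \<and>
    adj_or_eq G g g' \<and> adj_or_eq H h h'"
  unfolding strong_prod_def adj_Abs_graph[OF wf_strong_prod] by (simp add: adj_or_eq_def)

lemma graph_le_of_iso:
  assumes bij: "bij_betw \<phi> (gV G) (gV H)"
    and adj: "\<And>x y. x \<in> gV G \<Longrightarrow> y \<in> gV G \<Longrightarrow> adj H (\<phi> x) (\<phi> y) \<longleftrightarrow> adj G x y"
  shows "graph_le G H" "graph_le H G"
proof -
  show "graph_le G H"
    unfolding graph_le_def cohom_def
    using bij adj by (metis bij_betw_imp_surj_on bij_betw_imp_inj_on image_eqI inj_on_eq_iff subsetI)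
  let ?\<psi> = "inv_into (gV G) \<phi>"
  have bij_inv: "bij_betw ?\<psi> (gV H) (gV G)"
    using bij by (rule bij_betw_inv_into)
  have "adj G (?\<psi> x) (?\<psi> y) \<longleftrightarrow> adj H x y" if "x \<in> gV H" "y \<in> gV H" for x y
    using adj[of "?\<psi> x" "?\<psi> y"] bij_betw_apply[OF bij_inv] bij_betw_inv_into_right[OF bij] that
    by simp
  then show "graph_le H G"
    unfolding graph_le_def cohom_def
    using bij_inv by (metis bij_betw_imp_surj_on bij_betw_imp_inj_on image_eqI inj_on_eq_iff subsetI)
qed

lemma Delta_iso:
  assumes "f \<in> Delta" "bij_betw \<phi> (gV G) (gV H)"
    and "\<And>x y. x \<in> gV G \<Longrightarrow> y \<in> gV G \<Longrightarrow> adj H (\<phi> x) (\<phi> y) \<longleftrightarrow> adj G x y"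
  shows "f G = f H"
  using Delta_mono[OF assms(1) graph_le_of_iso(1)[OF assms(2,3)]]
    Delta_mono[OF assms(1) graph_le_of_iso(2)[OF assms(2,3)]]
  by simp

subsection \<open>Subadditivity over vertex covers\<close>

definition induced_subgraph :: "graph \<Rightarrow> nat set \<Rightarrow> graph" where
  "induced_subgraph H A = Abs_graph (gV H \<inter> A, gE H \<inter> (A \<times> A))"

lemma wf_induced_subgraph: "wf_graph (gV H \<inter> A, gE H \<inter> (A \<times> A))"
  unfolding wf_graph_def using finite_gV[of H] adj_sym[of H] adj_irrefl[of H] adj_in_gV[of H]
  by (auto simp: adj_def)

lemma gV_induced_subgraph [simp]: "gV (induced_subgraph H A) = gV H \<inter> A"
  unfolding induced_subgraph_def gV_Abs_graph[OF wf_induced_subgraph] by simp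

lemma adj_induced_subgraph [simp]: "adj (induced_subgraph H A) x y \<longleftrightarrow> adj H x y \<and> x \<in> A \<and> y \<in> A"
  unfolding induced_subgraph_def adj_Abs_graph[OF wf_induced_subgraph] by (auto simp: adj_def)

lemma induced_subgraph_induced_subgraph:
  "induced_subgraph (induced_subgraph H A) B = induced_subgraph H (A \<inter> B)"
  by (rule graph_eqI) auto

lemma graph_le_induced_subgraph: "graph_le (induced_subgraph H A) H"
  unfolding graph_le_def cohom_def by (rule exI[of _ id]) auto

lemma graph_le_disj_union_split:
  "graph_le H (disj_union (induced_subgraph H A) (induced_subgraph H (- A)))"
  unfolding graph_le_def cohom_def
  by (rule exI[of _ "\<lambda>v. if v \<in> A then 2 * v else 2 * v + 1"])
    (auto simp: gV_disj_union adj_disj_union; presburger)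

lemma graph_le_empty_graph: "gV H = {} \<Longrightarrow> graph_le H (empty_graph 0)"
  unfolding graph_le_def cohom_def by auto

lemma Delta_le_sum_cover:
  assumes f: "f \<in> Delta" and "finite C" and "gV H \<subseteq> (\<Union>c\<in>C. S c)"
  shows "f H \<le> (\<Sum>c\<in>C. f (induced_subgraph H (S c)))"
  using assms(2,3)
proof (induction C arbitrary: H rule: finite_induct)
  case empty
  then show ?case
    using Delta_mono[OF f graph_le_empty_graph[of H]] Delta_empty_graph[OF f, of 0] by simp
next
  case (insert c C)
  let ?rest = "induced_subgraph H (- S c)"
  have "f H \<le> f (induced_subgraph H (S c)) + f ?rest"
    using Delta_mono[OF f graph_le_disj_union_split[of H "S c"]] Delta_disj_union[OF f] by simp
  also have "f ?rest \<le> (\<Sum>c'\<in>C. f (induced_subgraph ?rest (S c')))"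
    using insert.prems by (intro insert.IH) auto
  also have "\<dots> \<le> (\<Sum>c'\<in>C. f (induced_subgraph H (S c')))"
  proof (rule sum_mono)
    fix c'
    have "induced_subgraph ?rest (S c') = induced_subgraph (induced_subgraph H (S c')) (- S c)"
      by (simp add: induced_subgraph_induced_subgraph Int_commute)
    then show "f (induced_subgraph ?rest (S c')) \<le> f (induced_subgraph H (S c'))"
      using Delta_mono[OF f graph_le_induced_subgraph] by metis
  qed
  finally show ?case
    using insert.hyps by simp
qed

definition vertex_lists :: "graph \<Rightarrow> nat \<Rightarrow> nat list set" where
  "vertex_lists G n = {xs. length xs = n \<and> set xs \<subseteq> gV G}"

definition strong_power :: "graph \<Rightarrow> nat \<Rightarrow> graph" where
  "strong_power G n = Abs_graph (list_encode ` vertex_lists G n,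
     {(list_encode xs, list_encode ys) | xs ys. xs \<in> vertex_lists G n \<and> ys \<in> vertex_lists G n
        \<and> xs \<noteq> ys \<and> list_all2 (adj_or_eq G) xs ys})"

lemma finite_vertex_lists: "finite (vertex_lists G n)"
  using finite_lists_length_eq[OF finite_gV, of G n] by (simp add: vertex_lists_def conj_commute)

lemma Cons_in_vertex_lists_Suc: "x # xs \<in> vertex_lists G (Suc n) \<longleftrightarrow> x \<in> gV G \<and> xs \<in> vertex_lists G n"
  by (auto simp: vertex_lists_def)

lemma vertex_lists_SucE:
  assumes "zs \<in> vertex_lists G (Suc n)"
  obtains x xs where "zs = x # xs" "x \<in> gV G" "xs \<in> vertex_lists G n"
  using assms by (cases zs) (auto simp: vertex_lists_def)

lemma wf_strong_power: "wf_graph (list_encode ` vertex_lists G n,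
     {(list_encode xs, list_encode ys) | xs ys. xs \<in> vertex_lists G n \<and> ys \<in> vertex_lists G n
        \<and> xs \<noteq> ys \<and> list_all2 (adj_or_eq G) xs ys})"
  unfolding wf_graph_def using finite_vertex_lists[of G n]
  by (auto simp: list_encode_eq list_all2_conv_all_nth adj_or_eq_sym)

lemma gV_strong_power: "gV (strong_power G n) = list_encode ` vertex_lists G n"
  unfolding strong_power_def gV_Abs_graph[OF wf_strong_power] by simp

lemma adj_strong_power: "adj (strong_power G n) (list_encode xs) (list_encode ys) \<longleftrightarrow>
    xs \<in> vertex_lists G n \<and> ys \<in> vertex_lists G n \<and> xs \<noteq> ys \<and> list_all2 (adj_or_eq G) xs ys"
  unfolding strong_power_def adj_Abs_graph[OF wf_strong_power] by (auto simp: list_encode_eq)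

lemma adj_or_eq_strong_power:
  "xs \<in> vertex_lists G n \<Longrightarrow> ys \<in> vertex_lists G n \<Longrightarrow>
    adj_or_eq (strong_power G n) (list_encode xs) (list_encode ys) \<longleftrightarrow> list_all2 (adj_or_eq G) xs ys"
  unfolding adj_or_eq_def adj_strong_power
  by (auto simp: list_encode_eq list_all2_conv_all_nth vertex_lists_def adj_or_eq_refl)

lemma strong_power_0: "strong_power G 0 = empty_graph 1"
proof (rule graph_eqI)
  show gV_eq: "gV (strong_power G 0) = gV (empty_graph 1)"
    by (auto simp: gV_strong_power vertex_lists_def)
  show "adj (strong_power G 0) x y \<longleftrightarrow> adj (empty_graph 1) x y" for x y
    using adj_in_gV[of "strong_power G 0" x y] adj_irrefl[of "strong_power G 0"] gV_eq by auto
qed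

lemma Delta_strong_power_Suc:
  assumes f: "f \<in> Delta"
  shows "f (strong_power G (Suc n)) = f (strong_prod G (strong_power G n))"
proof (rule Delta_iso[OF f])
  let ?\<phi> = "\<lambda>v. prod_encode (hd (list_decode v), list_encode (tl (list_decode v)))"
  let ?\<psi> = "\<lambda>w. list_encode (fst (prod_decode w) # list_decode (snd (prod_decode w)))"
  show "bij_betw ?\<phi> (gV (strong_power G (Suc n))) (gV (strong_prod G (strong_power G n)))"
  proof (rule bij_betw_byWitness[where f' = ?\<psi>])
    show "\<forall>a\<in>gV (strong_power G (Suc n)). ?\<psi> (?\<phi> a) = a"
      by (auto simp: gV_strong_power elim!: vertex_lists_SucE)
    show "\<forall>a\<in>gV (strong_prod G (strong_power G n)). ?\<phi> (?\<psi> a) = a"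
      by (auto simp: gV_strong_prod gV_strong_power)
    show "?\<phi> ` gV (strong_power G (Suc n)) \<subseteq> gV (strong_prod G (strong_power G n))"
      by (auto simp: gV_strong_power gV_strong_prod elim!: vertex_lists_SucE)
    show "?\<psi> ` gV (strong_prod G (strong_power G n)) \<subseteq> gV (strong_power G (Suc n))"
    proof
      fix z assume "z \<in> ?\<psi> ` gV (strong_prod G (strong_power G n))"
      then obtain a xs where "a \<in> gV G" "xs \<in> vertex_lists G n" "z = list_encode (a # xs)"
        by (auto simp: gV_strong_power gV_strong_prod simp del: list_encode.simps)
      then show "z \<in> gV (strong_power G (Suc n))"
        unfolding gV_strong_power by (auto simp: Cons_in_vertex_lists_Suc simp del: list_encode.simps)
    qed
  qed
  fix v w assume "v \<in> gV (strong_power G (Suc n))" "w \<in> gV (strong_power G (Suc n))"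
  then obtain x xs y ys
    where v: "v = list_encode (x # xs)" "x \<in> gV G" "xs \<in> vertex_lists G n"
      and w: "w = list_encode (y # ys)" "y \<in> gV G" "ys \<in> vertex_lists G n"
    by (auto simp: gV_strong_power elim!: vertex_lists_SucE)
  show "adj (strong_prod G (strong_power G n)) (?\<phi> v) (?\<phi> w) \<longleftrightarrow> adj (strong_power G (Suc n)) v w"
    using v w
    by (simp add: adj_strong_prod adj_strong_power gV_strong_power adj_or_eq_strong_power
        Cons_in_vertex_lists_Suc list_encode_eq del: list_encode.simps)
qed

lemma Delta_strong_power:
  assumes f: "f \<in> Delta"
  shows "f (strong_power G n) = f G ^ n"
proof (induction n)
  case 0
  then show ?case
    using Delta_empty_graph[OF f, of 1] by (simp add: strong_power_0)
next
  case (Suc n)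
  then show ?case
    using Delta_strong_power_Suc[OF f] Delta_strong_prod[OF f] by simp
qed

subsection \<open>Type classes\<close>

lemma automorphism_induced_subgraph:
  assumes aut: "automorphism H \<sigma>" and into: "\<sigma> ` (gV H \<inter> A) \<subseteq> A"
  shows "automorphism (induced_subgraph H A) \<sigma>"
  unfolding automorphism_def
proof (intro conjI ballI)
  have "\<sigma> ` (gV H \<inter> A) \<subseteq> gV H \<inter> A" "inj_on \<sigma> (gV H \<inter> A)"
    using aut into by (auto simp: automorphism_def bij_betw_def inj_on_subset)
  then show "bij_betw \<sigma> (gV (induced_subgraph H A)) (gV (induced_subgraph H A))"
    using finite_gV[of H] by (simp add: bij_betw_def endo_inj_surj)
  fix x y assume "x \<in> gV (induced_subgraph H A)" "y \<in> gV (induced_subgraph H A)"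
  then show "adj (induced_subgraph H A) (\<sigma> x) (\<sigma> y) \<longleftrightarrow> adj (induced_subgraph H A) x y"
    using aut into by (auto simp: automorphism_def)
qed

definition permute_coords :: "(nat \<Rightarrow> nat) \<Rightarrow> nat \<Rightarrow> nat" where
  "permute_coords p w = list_encode (permute_list p (list_decode w))"

lemma permute_coords_list_encode [simp]:
  "permute_coords p (list_encode xs) = list_encode (permute_list p xs)"
  by (simp add: permute_coords_def)

lemma permute_list_in_vertex_lists:
  "p permutes {..<n} \<Longrightarrow> xs \<in> vertex_lists G n \<Longrightarrow> permute_list p xs \<in> vertex_lists G n"
  by (simp add: vertex_lists_def)

lemma permute_list_inject:
  "p permutes {..<length xs} \<Longrightarrow> permute_list p xs = permute_list p ys \<longleftrightarrow> xs = ys"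
  using list_all2_permute_list_iff[of p xs "(=)" ys] by (simp add: list.rel_eq)

lemma automorphism_permute_coords:
  assumes p: "p permutes {..<n}"
  shows "automorphism (strong_power G n) (permute_coords p)"
  unfolding automorphism_def
proof (intro conjI ballI)
  have p_len: "p permutes {..<length xs}" if "xs \<in> vertex_lists G n" for xs
    using p that by (simp add: vertex_lists_def)
  have "permute_coords p ` gV (strong_power G n) \<subseteq> gV (strong_power G n)"
    using permute_list_in_vertex_lists[OF p] by (auto simp: gV_strong_power)
  moreover have "inj_on (permute_coords p) (gV (strong_power G n))"
    using permute_list_inject[OF p_len] by (auto simp: inj_on_def gV_strong_power list_encode_eq)
  ultimately show "bij_betw (permute_coords p) (gV (strong_power G n)) (gV (strong_power G n))"
    using finite_gV by (simp add: bij_betw_def endo_inj_surj)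
  fix v w assume "v \<in> gV (strong_power G n)" "w \<in> gV (strong_power G n)"
  then obtain xs ys where "v = list_encode xs" "w = list_encode ys"
    and xs: "xs \<in> vertex_lists G n" and ys: "ys \<in> vertex_lists G n"
    by (auto simp: gV_strong_power)
  moreover have "permute_list p xs = permute_list p ys \<longleftrightarrow> xs = ys"
    using permute_list_inject[OF p_len[OF xs]] .
  ultimately show "adj (strong_power G n) (permute_coords p v) (permute_coords p w) \<longleftrightarrow>
      adj (strong_power G n) v w"
    using permute_list_in_vertex_lists[OF p]
    by (simp add: adj_strong_power list_all2_permute_list_iff[OF p_len[OF xs]] del: list_encode.simps)
qed

definition type_class_of :: "graph \<Rightarrow> (nat \<Rightarrow> nat) \<Rightarrow> nat set" where
  "type_class_of G c = list_encode ` {xs. \<forall>v\<in>gV G. count (mset xs) v = c v}"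

lemma mset_eq_if_count_eq_on:
  assumes "set xs \<subseteq> V" "set ys \<subseteq> V" "\<forall>v\<in>V. count (mset xs) v = count (mset ys) v"
  shows "mset xs = mset ys"
  using assms by (metis count_mset_0_iff multiset_eqI subsetD)

lemma permute_coords_in_type_class_of:
  assumes p: "p permutes {..<n}" and w: "w \<in> gV (strong_power G n)" "w \<in> type_class_of G c"
  shows "permute_coords p w \<in> type_class_of G c"
proof -
  obtain zs zs' where zs: "w = list_encode zs" "zs \<in> vertex_lists G n"
    and zs': "w = list_encode zs'" "\<forall>v\<in>gV G. count (mset zs') v = c v"
    using w unfolding gV_strong_power type_class_of_def by blast
  have "zs' = zs"
    using zs(1) zs'(1) by (simp add: list_encode_eq)
  moreover have "mset (permute_list p zs) = mset zs"
    using p zs(2) by (simp add: vertex_lists_def)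
  ultimately show ?thesis
    unfolding type_class_of_def zs(1) permute_coords_list_encode
    using zs'(2) by (intro imageI) simp
qed

lemma vertex_transitive_type_class:
  "vertex_transitive (induced_subgraph (strong_power G n) (type_class_of G c))"
  unfolding vertex_transitive_def
proof (intro ballI)
  let ?H = "induced_subgraph (strong_power G n) (type_class_of G c)"
  fix u v assume "u \<in> gV ?H" "v \<in> gV ?H"
  then obtain xs ys where xs: "u = list_encode xs" "xs \<in> vertex_lists G n"
      "\<forall>v\<in>gV G. count (mset xs) v = c v"
    and ys: "v = list_encode ys" "ys \<in> vertex_lists G n" "\<forall>v\<in>gV G. count (mset ys) v = c v"
    by (auto simp: gV_strong_power type_class_of_def list_encode_eq)
  have "mset ys = mset xs"
    using xs ys by (intro mset_eq_if_count_eq_on[of _ "gV G"]) (auto simp: vertex_lists_def)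
  then obtain p where p_len: "p permutes {..<length xs}" and p: "permute_list p xs = ys"
    by (rule mset_eq_permutation)
  have p_n: "p permutes {..<n}"
    using p_len xs(2) by (simp add: vertex_lists_def)
  have "permute_coords p ` (gV (strong_power G n) \<inter> type_class_of G c) \<subseteq> type_class_of G c"
    using permute_coords_in_type_class_of[OF p_n] by blast
  then have "automorphism ?H (permute_coords p)"
    using automorphism_permute_coords[OF p_n] by (rule automorphism_induced_subgraph[rotated])
  moreover have "permute_coords p u = v"
    using xs ys p by simp
  ultimately show "\<exists>\<sigma>. automorphism ?H \<sigma> \<and> \<sigma> u = v"
    by blast
qed

lemma strong_power_covered_by_type_classes:
  "gV (strong_power G n) \<subseteq> (\<Union>c \<in> Pi\<^sub>E (gV G) (\<lambda>_. {..n}). type_class_of G c)"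
proof
  fix w assume "w \<in> gV (strong_power G n)"
  then obtain xs where xs: "w = list_encode xs" "xs \<in> vertex_lists G n"
    by (auto simp: gV_strong_power)
  let ?c = "restrict (\<lambda>v. count (mset xs) v) (gV G)"
  have "?c \<in> Pi\<^sub>E (gV G) (\<lambda>_. {..n})"
    using xs count_le_size[of "mset xs"] by (auto simp: vertex_lists_def)
  moreover have "w \<in> type_class_of G ?c"
    using xs by (auto simp: type_class_of_def)
  ultimately show "w \<in> (\<Union>c \<in> Pi\<^sub>E (gV G) (\<lambda>_. {..n}). type_class_of G c)"
    by blast
qed

subsection \<open>The growth argument\<close>

lemma le_if_power_le_poly_mult_power:
  fixes a b :: real
  assumes "0 \<le> a" and bound: "\<And>n. b ^ n \<le> (real n + 1) ^ m * a ^ n"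
  shows "b \<le> a"
proof (rule ccontr)
  assume "\<not> b \<le> a"
  then have "a < b" by simp
  show False
  proof (cases "a = 0")
    case True
    then show False
      using bound[of 1] \<open>a < b\<close> by simp
  next
    case False
    with \<open>0 \<le> a\<close> have "a > 0" by simp
    define r where "r = b / a"
    have "r > 1"
      using \<open>a > 0\<close> \<open>a < b\<close> by (simp add: r_def)
    then have "(\<lambda>n. (real n + 1) ^ m / r ^ n) \<longlonglongrightarrow> 0"
      by real_asymp
    then obtain n where "(real n + 1) ^ m / r ^ n < 1"
      by (metis (no_types, lifting) eventually_sequentially order_refl order_tendstoD(2) zero_less_one)
    then have "(real n + 1) ^ m * a ^ n < b ^ n"
      using \<open>r > 1\<close> \<open>a > 0\<close> by (simp add: r_def power_divide divide_less_eq field_simps)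
    then show False
      using bound[of n] by simp
  qed
qed

lemma Delta_le_if_agree_on_vertex_transitive:
  assumes f0: "f0 \<in> Delta" and f1: "f1 \<in> Delta"
    and agree: "\<And>H. vertex_transitive H \<Longrightarrow> f0 H = f1 H"
  shows "f1 G \<le> f0 G"
proof (rule le_if_power_le_poly_mult_power[OF Delta_nonneg[OF f0]])
  fix n :: nat
  define C where "C = Pi\<^sub>E (gV G) (\<lambda>_. {..n})"
  let ?class = "\<lambda>c. induced_subgraph (strong_power G n) (type_class_of G c)"
  have "finite C"
    using finite_gV by (simp add: C_def finite_PiE)
  have "f1 G ^ n = f1 (strong_power G n)"
    using Delta_strong_power[OF f1] by simp
  also have "\<dots> \<le> (\<Sum>c\<in>C. f1 (?class c))"
    using Delta_le_sum_cover[OF f1 \<open>finite C\<close> strong_power_covered_by_type_classes[of G n, folded C_def]]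
    by simp
  also have "\<dots> = (\<Sum>c\<in>C. f0 (?class c))"
    using agree vertex_transitive_type_class by simp
  also have "\<dots> \<le> (\<Sum>c\<in>C. f0 (strong_power G n))"
    by (intro sum_mono Delta_mono[OF f0 graph_le_induced_subgraph])
  also have "\<dots> = (real n + 1) ^ card (gV G) * f0 G ^ n"
    using Delta_strong_power[OF f0] finite_gV by (simp add: C_def card_PiE add.commute)
  finally show "f1 G ^ n \<le> (real n + 1) ^ card (gV G) * f0 G ^ n" .
qed

theorem lemma10:
  fixes f0 f1 :: "graph \<Rightarrow> real"
  assumes "f0 \<in> Delta" and "f1 \<in> Delta" and "f0 \<noteq> f1"
  shows "\<exists>G. vertex_transitive G \<and> f0 G \<noteq> f1 G"
proof (rule ccontr)
  assume "\<not> ?thesis"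
  then have agree: "\<And>H. vertex_transitive H \<Longrightarrow> f0 H = f1 H"
    by blast
  have "f0 G = f1 G" for G
    using Delta_le_if_agree_on_vertex_transitive[OF assms(1,2) agree]
      Delta_le_if_agree_on_vertex_transitive[OF assms(2,1) agree[symmetric]]
    by (rule antisym[rotated])
  then show False
    using assms(3) by blast
qed

end
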